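(* Let $i\in\{2,\dots,n\}$ and let $j\in\{1,\dots,i-1\}$ be the index of the disk that eliminates $D_i$, i.e., $t_i=t(i,j)$. Then \[ d\big(\nu(D_i^{t_i}),\nu(D_j^{t_i})\big)\le 2\big(|\nu(D_i^{t_i})|+|\nu(D_j^{t_i})|\big) \] and \[ \frac{1}{4\Delta}\le \frac{|\nu(D_i^{t_i})|}{|\nu(D_j^{t_i})|}\le 4\Delta. \]
   Context: Growing prioritized disks: centers $p_1,\dots,p_n\in[0,1]^2$ (pairwise distinct) and growth rates $v_1,\dots,v_n>0$; at time $t\ge0$ the disk $D_i^t$ is centered at $p_i$ with radius $tv_i$. Smaller index means higher priority; $t(i,j)=|p_ip_j|/(v_i+v_j)$. Whenever $D_i,D_j$ with $i<j$ touch at time $t(i,j)$ and neither has been removed before, $D_j$ is removed and $D_i$ keeps growing; $t_i$ is the time $D_i$ is removed ($t_1=\infty$); all $t(i,j)$ are pairwise distinct. $\Delta=\max_i v_i/\min_j v_j$. Quadtree $\mathcal{Q}$: a rooted tree in which each internal node has four children and each node $\nu$ has a square cell $b(\nu)$; the root cell is $[0,1]^2$ and a node's cell is split into four congruent quadrants giving its children's cells; subdivision stops when each cell at the bottom level contains at most one disk center and any cell containing a disk center is surrounded by two layers of empty cells. $|\nu|$ is the diameter of $b(\nu)$, and $d(\nu,\nu')$ is the smallest distance between a point of $b(\nu)$ and a point of $b(\nu')$. The disk $D_i^t$ occupies node $\nu$ if (i) $p_i\in b(\nu)$, (ii) $\nu$ is a leaf or $b(\nu)\subseteq D_i^t$,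 and (iii) $D_i$ has not been eliminated by time $t$. $\nu(D_i^t)$ denotes the node with the largest cell of $\mathcal{Q}$ that is occupied by $D_i^t$. *)

theory Defs
  imports "HOL-Analysis.Analysis"
begin

text \<open>Disks are indexed by 1..n; centers p :: nat => real*real (Euclidean plane),
 growth rates v :: nat => real.\<close>

definition touch_time :: "(nat \<Rightarrow> real \<times> real) \<Rightarrow> (nat \<Rightarrow> real) \<Rightarrow> nat \<Rightarrow> nat \<Rightarrow> real" where
  "touch_time p v i j = dist (p i) (p j) / (v i + v j)"

text \<open>elim_table p v m k gives the elimination time t_k for all k < m.
 A disk D_k is removed at the first time t(k,j) with j < k at which D_j is still present,
 i.e. t(k,j) < t_j (disks of lower priority never remove D_k).  Inf of the empty set is
 infinity, so t_1 = infinity.\<close>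
primrec elim_table :: "(nat \<Rightarrow> real \<times> real) \<Rightarrow> (nat \<Rightarrow> real) \<Rightarrow> nat \<Rightarrow> nat \<Rightarrow> ereal" where
  "elim_table p v 0 = (\<lambda>_. \<infinity>)"
| "elim_table p v (Suc m) = (elim_table p v m)(m :=
      Inf {ereal (touch_time p v m j) | j. 1 \<le> j \<and> j < m \<and>
             ereal (touch_time p v m j) < elim_table p v m j})"

definition elim_time :: "(nat \<Rightarrow> real \<times> real) \<Rightarrow> (nat \<Rightarrow> real) \<Rightarrow> nat \<Rightarrow> ereal" where
  "elim_time p v k = elim_table p v (Suc k) k"

text \<open>Quadtree nodes: (k, a, b) is the cell of level k (side 1/2^k) with lower-left corner
 (a/2^k, b/2^k).  Cells are closed squares.\<close>
type_synonym qnode = "nat \<times> nat \<times> nat"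

definition cell :: "qnode \<Rightarrow> (real \<times> real) set" where
  "cell N = (case N of (k, a, b) \<Rightarrow>
     {(x, y). real a / 2 ^ k \<le> x \<and> x \<le> (real a + 1) / 2 ^ k \<and>
              real b / 2 ^ k \<le> y \<and> y \<le> (real b + 1) / 2 ^ k})"

text \<open>The 5x5 block of same-size cells consisting of the cell and its two surrounding layers.\<close>
definition block :: "qnode \<Rightarrow> (real \<times> real) set" where
  "block N = (case N of (k, a, b) \<Rightarrow>
     {(x, y). (real a - 2) / 2 ^ k \<le> x \<and> x \<le> (real a + 3) / 2 ^ k \<and>
              (real b - 2) / 2 ^ k \<le> y \<and> y \<le> (real b + 3) / 2 ^ k})"

text \<open>A cell is subdivided iff it violates the stopping rule: it contains a center q and
 another center lies in the cell or in its two surrounding layers of cells.\<close>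
definition splits :: "(nat \<Rightarrow> real \<times> real) \<Rightarrow> nat \<Rightarrow> qnode \<Rightarrow> bool" where
  "splits p n N \<longleftrightarrow> (\<exists>q\<in>p ` {1..n}. q \<in> cell N \<and>
       (\<exists>q'\<in>p ` {1..n}. q' \<noteq> q \<and> q' \<in> block N))"

definition in_quadtree :: "(nat \<Rightarrow> real \<times> real) \<Rightarrow> nat \<Rightarrow> qnode \<Rightarrow> bool" where
  "in_quadtree p n N = (case N of (k, a, b) \<Rightarrow>
     a < 2 ^ k \<and> b < 2 ^ k \<and>
     (\<forall>k' < k. splits p n (k', a div 2 ^ (k - k'), b div 2 ^ (k - k'))))"

definition is_leaf :: "(nat \<Rightarrow> real \<times> real) \<Rightarrow> nat \<Rightarrow> qnode \<Rightarrow> bool" where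
  "is_leaf p n N \<longleftrightarrow> in_quadtree p n N \<and> \<not> splits p n N"

text \<open>D_i^t occupies N.  Condition (iii): D_i has not been removed before time t
 (so D_i^{t_i} is still considered present at its elimination time t_i).\<close>
definition occupies :: "(nat \<Rightarrow> real \<times> real) \<Rightarrow> (nat \<Rightarrow> real) \<Rightarrow> nat \<Rightarrow> nat \<Rightarrow> real \<Rightarrow> qnode \<Rightarrow> bool" where
  "occupies p v n i t N \<longleftrightarrow> in_quadtree p n N \<and> p i \<in> cell N \<and>
     (is_leaf p n N \<or> cell N \<subseteq> cball (p i) (t * v i)) \<and> ereal t \<le> elim_time p v i"

definition largest_occupied :: "(nat \<Rightarrow> real \<times> real) \<Rightarrow> (nat \<Rightarrow> real) \<Rightarrow> nat \<Rightarrow> nat \<Rightarrow> real \<Rightarrow> qnode \<Rightarrow> bool" where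
  "largest_occupied p v n i t N \<longleftrightarrow> occupies p v n i t N \<and>
     (\<forall>N'. occupies p v n i t N' \<longrightarrow> diameter (cell N') \<le> diameter (cell N))"

end

theory Submission
  imports Defs
begin

text \<open>At the touching time \<open>t = t(i,j)\<close> the radii \<open>r\<^sub>i = t v\<^sub>i\<close> and \<open>r\<^sub>j = t v\<^sub>j\<close> add up to
  \<open>|p\<^sub>i p\<^sub>j|\<close>.  The largest node occupied by a disk of radius \<open>r\<close> has diameter at least
  \<open>min \<surd>2 (r/2)\<close>: the dyadic cell around the center of diameter in \<open>(r/2, r]\<close> either lies in the
  quadtree and is covered by the disk, or has a leaf ancestor.  Conversely an occupied cell is
  covered by the disk (diameter \<open>\<le> 2r\<close>) or is a leaf, whose empty two-layer neighbourhood keeps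
  every other center at distance more than its diameter.  Since both radii are within a factor
  \<open>\<Delta>\<close> of each other, these bounds give the ratio estimate, and the distance between the two
  cells is at most \<open>r\<^sub>i + r\<^sub>j\<close>, which is at most twice the sum of the diameters.\<close>

lemma mem_cell_iff:
  "q \<in> cell (k, a, b) \<longleftrightarrow>
     real a / 2^k \<le> fst q \<and> fst q \<le> (real a + 1) / 2^k \<and>
     real b / 2^k \<le> snd q \<and> snd q \<le> (real b + 1) / 2^k"
  by (cases q) (simp add: cell_def)

lemma mem_block_iff:
  "q \<in> block (k, a, b) \<longleftrightarrow>
     (real a - 2) / 2^k \<le> fst q \<and> fst q \<le> (real a + 3) / 2^k \<and>
     (real b - 2) / 2^k \<le> snd q \<and> snd q \<le> (real b + 3) / 2^k"
  by (cases q) (simp add: block_def)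

lemma dist_le_sqrt2_mult:
  fixes q q' :: "real \<times> real"
  assumes "\<bar>fst q - fst q'\<bar> \<le> s" "\<bar>snd q - snd q'\<bar> \<le> s"
  shows "dist q q' \<le> sqrt 2 * s"
proof -
  have s: "0 \<le> s" using assms(1) by linarith
  have "(fst q - fst q')^2 \<le> s^2" "(snd q - snd q')^2 \<le> s^2"
    using assms s by (metis abs_le_square_iff abs_of_nonneg)+
  then have "dist q q' \<le> sqrt (2 * s^2)"
    by (simp add: dist_prod_def dist_real_def)
  also have "\<dots> = sqrt 2 * s" using s by (simp add: real_sqrt_mult)
  finally show ?thesis .
qed

lemma dist_le_in_cell:
  assumes "q \<in> cell (k, a, b)" "q' \<in> cell (k, a, b)"
  shows "dist q q' \<le> sqrt 2 / 2^k"
proof -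
  have split: "(real a + 1) / 2^k = real a / 2^k + 1 / 2^k" "(real b + 1) / 2^k = real b / 2^k + 1 / 2^k"
    by (simp_all add: add_divide_distrib)
  have "\<bar>fst q - fst q'\<bar> \<le> 1 / 2^k" "\<bar>snd q - snd q'\<bar> \<le> 1 / 2^k"
    using assms unfolding mem_cell_iff split abs_le_iff by linarith+
  then show ?thesis using dist_le_sqrt2_mult by fastforce
qed

lemma bounded_cell: "bounded (cell N)"
proof -
  obtain k a b where N: "N = (k, a, b)" by (cases N)
  have "cell N \<subseteq> cball (real a / 2^k, real b / 2^k) (sqrt 2 / 2^k)"
    using dist_le_in_cell[of _ k a b] by (auto simp: N mem_cell_iff)
  then show ?thesis using bounded_subset bounded_cball by blast
qed

lemma diameter_cell: "diameter (cell (k, a, b)) = sqrt 2 / 2^k"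
proof (rule antisym)
  show "diameter (cell (k, a, b)) \<le> sqrt 2 / 2^k"
    by (rule diameter_le) (auto simp: dist_norm[symmetric] intro: dist_le_in_cell)
next
  let ?lo = "(real a / 2^k, real b / 2^k)" and ?hi = "((real a + 1) / 2^k, (real b + 1) / 2^k)"
  have "?lo \<in> cell (k, a, b)" "?hi \<in> cell (k, a, b)"
    by (auto simp: mem_cell_iff divide_right_mono)
  then have "dist ?lo ?hi \<le> diameter (cell (k, a, b))"
    using bounded_cell diameter_bounded_bound by blast
  moreover have "dist ?lo ?hi = sqrt (2 * (1 / 2^k)^2)"
    by (simp add: dist_prod_def dist_real_def add_divide_distrib)
  ultimately show "sqrt 2 / 2^k \<le> diameter (cell (k, a, b))"
    by (simp add: real_sqrt_mult real_sqrt_divide)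
qed

lemma diameter_cell_pos: "0 < diameter (cell N)"
  by (cases N) (simp add: diameter_cell)

lemma diameter_cell_le_sqrt2: "diameter (cell N) \<le> sqrt 2"
  by (cases N) (simp add: diameter_cell divide_le_eq)

lemma cell_subset_cball:
  assumes "diameter (cell N) \<le> r" "q \<in> cell N"
  shows "cell N \<subseteq> cball q r"
proof
  fix y assume "y \<in> cell N"
  then have "dist q y \<le> diameter (cell N)"
    using assms(2) bounded_cell diameter_bounded_bound by blast
  then show "y \<in> cball q r" using assms(1) by simp
qed

lemma unit_interval_dyadic_index:
  fixes x :: real
  assumes "0 \<le> x" "x \<le> 1"
  obtains a :: nat where "a < 2^k" "real a / 2^k \<le> x" "x \<le> (real a + 1) / 2^k"
proof (cases "x = 1")
  case True
  have "real (2^k - 1 :: nat) = 2^k - 1" by (simp add: of_nat_diff)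
  with True show ?thesis by (intro that[of "2^k - 1"]) (auto simp: divide_simps)
next
  case False
  define a where "a = nat \<lfloor>x * 2^k\<rfloor>"
  have a: "real a = of_int \<lfloor>x * 2^k\<rfloor>" using assms by (simp add: a_def)
  then have lo: "real a \<le> x * 2^k" and hi: "x * 2^k < real a + 1" by linarith+
  have "x * 2^k < 1 * 2^k" using False assms by (intro mult_strict_right_mono) auto
  then have "real a < 2^k" using lo by linarith
  then have "real a < real ((2::nat)^k)" by simp
  then have "a < 2^k" by (simp only: of_nat_less_iff)
  with lo hi show ?thesis by (intro that[of a]) (auto simp: divide_simps)
qed

lemma dyadic_ancestor_bounds:
  fixes x :: real
  assumes "real a / 2^k \<le> x" "x \<le> (real a + 1) / 2^k" "k' \<le> k"
  shows "real (a div 2^(k - k')) / 2^k' \<le> x \<and> x \<le> (real (a div 2^(k - k')) + 1) / 2^k'"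
proof -
  define m where "m = k - k'"
  define a' where "a' = a div 2^m"
  have pow: "(2::real)^k = 2^k' * 2^m" using assms(3) by (simp add: m_def power_add[symmetric])
  have "a' * 2^m \<le> a" by (simp add: a'_def div_times_less_eq_dividend)
  then have "real (a' * 2^m) \<le> real a" by (rule of_nat_mono)
  then have lo: "real a' * 2^m \<le> real a" by simp
  have "a = a' * 2^m + a mod 2^m" by (simp add: a'_def div_mult_mod_eq)
  moreover have "a mod 2^m < 2^m" by simp
  moreover have "(a' + 1) * 2^m = a' * 2^m + (2::nat)^m" by simp
  ultimately have "a + 1 \<le> (a' + 1) * 2^m" by linarith
  then have "real (a + 1) \<le> real ((a' + 1) * 2^m)" by (rule of_nat_mono)
  then have hi: "real a + 1 \<le> (real a' + 1) * 2^m" by (simp add: algebra_simps)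
  have "real a' / 2^k' = real a' * 2^m / 2^k" using pow by simp
  also have "\<dots> \<le> real a / 2^k" using lo by (simp add: divide_right_mono)
  finally have "real a' / 2^k' \<le> x" using assms(1) by linarith
  moreover have "(real a + 1) / 2^k \<le> (real a' + 1) * 2^m / 2^k" using hi by (simp add: divide_right_mono)
  with assms(2) pow have "x \<le> (real a' + 1) / 2^k'" by simp
  ultimately show ?thesis by (simp add: a'_def m_def)
qed

lemma quadtree_node_at_level:
  assumes "0 \<le> fst q" "fst q \<le> 1" "0 \<le> snd q" "snd q \<le> 1"
  obtains C where "in_quadtree p n C" "q \<in> cell C" "sqrt 2 / 2^k \<le> diameter (cell C)"
    "is_leaf p n C \<or> diameter (cell C) = sqrt 2 / 2^k"
proof -
  obtain a where a: "a < 2^k" "real a / 2^k \<le> fst q" "fst q \<le> (real a + 1) / 2^k"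
    using unit_interval_dyadic_index assms by metis
  obtain b where b: "b < 2^k" "real b / 2^k \<le> snd q" "snd q \<le> (real b + 1) / 2^k"
    using unit_interval_dyadic_index assms by metis
  let ?anc = "\<lambda>l. (l, a div 2^(k - l), b div 2^(k - l))"
  show ?thesis
  proof (cases "in_quadtree p n (k, a, b)")
    case True
    then show ?thesis using a b by (intro that[of "(k, a, b)"]) (simp_all add: mem_cell_iff diameter_cell)
  next
    case False
    then have ex: "\<exists>l. l < k \<and> \<not> splits p n (?anc l)"
      using a(1) b(1) by (auto simp: in_quadtree_def)
    define l where "l = (LEAST l. l < k \<and> \<not> splits p n (?anc l))"
    have l: "l < k" "\<not> splits p n (?anc l)"
      using LeastI_ex[OF ex] by (simp_all add: l_def)
    have below: "splits p n (?anc l')" if "l' < l" for l'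
      using not_less_Least[of l' "\<lambda>l. l < k \<and> \<not> splits p n (?anc l)"] that l(1) l_def by auto
    have pow: "(2::nat)^k = 2^l * 2^(k - l)" using l(1) by (simp add: power_add[symmetric])
    have div_div: "x div 2^(k - l) div 2^(l - l') = x div 2^(k - l')" if "l' < l" for x l' :: nat
    proof -
      have "(2::nat)^(k - l) * 2^(l - l') = 2^(k - l')" using that l(1) by (simp add: power_add[symmetric])
      then show ?thesis by (metis div_mult2_eq)
    qed
    have "in_quadtree p n (?anc l)"
      unfolding in_quadtree_def using a(1) b(1) pow below div_div
      by (auto intro!: less_mult_imp_div_less)
    then have leaf: "is_leaf p n (?anc l)" using l(2) by (simp add: is_leaf_def)
    have "q \<in> cell (?anc l)"
      using dyadic_ancestor_bounds[OF a(2,3), of l] dyadic_ancestor_bounds[OF b(2,3), of l] l(1)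
      by (simp add: mem_cell_iff)
    moreover have "sqrt 2 / 2^k \<le> sqrt 2 / 2^l"
      using l(1) by (intro divide_left_mono power_increasing) auto
    ultimately show ?thesis using leaf by (intro that[of "?anc l"]) (simp_all add: diameter_cell is_leaf_def)
  qed
qed

lemma exists_dyadic_scale:
  fixes r :: real
  assumes "0 < r"
  obtains k :: nat where "sqrt 2 / 2^k \<le> r" "min (sqrt 2) (r / 2) \<le> sqrt 2 / 2^k"
proof -
  obtain k0 :: nat where "sqrt 2 / r < 2^k0" using real_arch_pow[of 2 "sqrt 2 / r"] by auto
  then have "sqrt 2 / 2^k0 \<le> r" using assms by (simp add: field_simps)
  then have ex: "\<exists>k::nat. sqrt 2 / 2^k \<le> r" by blast
  define k where "k = (LEAST k::nat. sqrt 2 / 2^k \<le> r)"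
  have k: "sqrt 2 / 2^k \<le> r" using LeastI_ex[OF ex] by (simp add: k_def)
  have "min (sqrt 2) (r / 2) \<le> sqrt 2 / 2^k"
  proof (cases k)
    case (Suc k')
    then have "\<not> sqrt 2 / 2^k' \<le> r" using not_less_Least[of k' "\<lambda>k. sqrt 2 / 2^k \<le> r"] k_def by auto
    then have "r / 2 < sqrt 2 / 2^k" using Suc by (simp add: field_simps)
    then show ?thesis by (simp add: min_le_iff_disj)
  qed simp
  with k show ?thesis by (rule that)
qed

lemma largest_occupied_diameter_ge:
  assumes "0 \<le> fst (p m)" "fst (p m) \<le> 1" "0 \<le> snd (p m)" "snd (p m) \<le> 1"
    and N: "largest_occupied p v n m t N" and r: "0 < t * v m"
  shows "min (sqrt 2) (t * v m / 2) \<le> diameter (cell N)"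
proof -
  obtain k where k: "sqrt 2 / 2^k \<le> t * v m" "min (sqrt 2) (t * v m / 2) \<le> sqrt 2 / 2^k"
    using exists_dyadic_scale r by metis
  obtain C where C: "in_quadtree p n C" "p m \<in> cell C" "sqrt 2 / 2^k \<le> diameter (cell C)"
    "is_leaf p n C \<or> diameter (cell C) = sqrt 2 / 2^k"
    using quadtree_node_at_level assms(1-4) by metis
  have "is_leaf p n C \<or> cell C \<subseteq> cball (p m) (t * v m)"
    using C(2,4) k(1) cell_subset_cball by fastforce
  then have "occupies p v n m t C" using C(1,2) N by (simp add: occupies_def largest_occupied_def)
  then have "diameter (cell C) \<le> diameter (cell N)" using N unfolding largest_occupied_def by blast
  with C(3) k(2) show ?thesis by linarith
qed

lemma occupies_diameter_le:
  assumes N: "occupies p v n m t N" and m: "m \<in> {1..n}" "m' \<in> {1..n}" "p m' \<noteq> p m"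
  shows "diameter (cell N) \<le> 2 * (t * v m) \<or> diameter (cell N) < dist (p m) (p m')"
proof -
  obtain k a b where Nk: "N = (k, a, b)" by (cases N)
  from N have inN: "p m \<in> cell N" and cases: "is_leaf p n N \<or> cell N \<subseteq> cball (p m) (t * v m)"
    by (auto simp: occupies_def)
  from cases show ?thesis
  proof
    assume "is_leaf p n N"
    then have "p m' \<notin> block N" using inN m unfolding is_leaf_def splits_def by blast
    moreover have "(real a - 2) / 2^k = real a / 2^k - 2 / 2^k" "(real a + 3) / 2^k = (real a + 1) / 2^k + 2 / 2^k"
      "(real b - 2) / 2^k = real b / 2^k - 2 / 2^k" "(real b + 3) / 2^k = (real b + 1) / 2^k + 2 / 2^k"
      by (simp_all add: diff_divide_distrib add_divide_distrib)
    ultimately have "2 / 2^k < \<bar>fst (p m) - fst (p m')\<bar> \<or> 2 / 2^k < \<bar>snd (p m) - snd (p m')\<bar>"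
      using inN unfolding Nk mem_block_iff mem_cell_iff by auto
    then have "2 / 2^k < dist (p m) (p m')"
      using dist_fst_le[of "p m" "p m'"] dist_snd_le[of "p m" "p m'"] by (auto simp: dist_real_def)
    moreover have "sqrt 2 < sqrt 4" by (rule real_sqrt_less_mono) simp
    then have "sqrt 2 / 2^k < 2 / 2^k" by (simp add: divide_strict_right_mono)
    ultimately show ?thesis by (simp add: Nk diameter_cell)
  next
    assume sub: "cell N \<subseteq> cball (p m) (t * v m)"
    have "diameter (cell N) \<le> 2 * (t * v m)"
    proof (rule diameter_le)
      show "cell N \<noteq> {} \<or> 0 \<le> 2 * (t * v m)" using inN by auto
      fix x y assume "x \<in> cell N" "y \<in> cell N"
      then have "dist (p m) x \<le> t * v m" "dist (p m) y \<le> t * v m" using sub by auto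
      then show "norm (x - y) \<le> 2 * (t * v m)"
        using dist_triangle[of x y "p m"] by (simp add: dist_norm[symmetric] dist_commute)
    qed
    then show ?thesis by simp
  qed
qed

lemma largest_occupied_diameter_bounds:
  assumes "0 \<le> fst (p m) \<and> fst (p m) \<le> 1 \<and> 0 \<le> snd (p m) \<and> snd (p m) \<le> 1"
    and N: "largest_occupied p v n m t N" and "0 < t * v m"
    and "m \<in> {1..n}" "m' \<in> {1..n}" "p m' \<noteq> p m"
  shows "min (sqrt 2) (t * v m / 2) \<le> diameter (cell N)"
    and "diameter (cell N) \<le> 2 * (t * v m) \<or> diameter (cell N) < dist (p m) (p m')"
  using largest_occupied_diameter_ge[of p m] occupies_diameter_le[of p v n m t N m'] assms
  by (auto simp: largest_occupied_def)

lemma diameter_ratio_le: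
  fixes d d' r r' D :: real
  assumes "0 < d'" "d \<le> sqrt 2" "min (sqrt 2) (r' / 2) \<le> d'"
    and "d \<le> 2 * r \<or> d < r + r'" "r \<le> D * r'" "1 \<le> D" "0 < r'"
  shows "d \<le> 4 * D * d'"
proof (cases "sqrt 2 \<le> r' / 2")
  case True
  then have "d \<le> 1 * d'" using assms(2,3) by simp
  also have "\<dots> \<le> 4 * D * d'" using assms(1,6) by (intro mult_right_mono) auto
  finally show ?thesis .
next
  case False
  then have "r' \<le> 2 * d'" using assms(3) by simp
  moreover have "1 * (2 * d') \<le> D * (2 * d')" using assms(1,6) by (intro mult_right_mono) auto
  ultimately have "D * r' \<le> 2 * D * d'" and "r' \<le> 2 * D * d'"
    using assms(6) mult_left_mono[of r' "2 * d'" D] by auto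
  then show ?thesis using assms(4,5) by linarith
qed

lemma rate_le_ratio_mult:
  fixes v :: "'a \<Rightarrow> real"
  assumes "finite A" "\<forall>k\<in>A. 0 < v k" "a \<in> A" "b \<in> A"
  shows "v a \<le> Max (v ` A) / Min (v ` A) * v b"
proof -
  have "Min (v ` A) \<in> v ` A" using assms by (intro Min_in) auto
  then have "0 < Min (v ` A)" using assms by auto
  moreover have "v a \<le> Max (v ` A)" "Min (v ` A) \<le> v b" using assms by auto
  ultimately have "v a * Min (v ` A) \<le> Max (v ` A) * v b"
    by (meson assms mult_mono less_le_not_le order_trans)
  then show ?thesis using \<open>0 < Min (v ` A)\<close> by (simp add: field_simps)
qed

lemma one_le_Max_div_Min:
  fixes v :: "'a \<Rightarrow> real"
  assumes "finite A" "\<forall>k\<in>A. 0 < v k" "a \<in> A"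
  shows "1 \<le> Max (v ` A) / Min (v ` A)"
proof -
  have "Min (v ` A) \<in> v ` A" using assms by (intro Min_in) auto
  moreover have "Min (v ` A) \<le> v a" "v a \<le> Max (v ` A)" using assms by auto
  ultimately show ?thesis using assms by (auto simp: le_divide_eq)
qed

lemma diameter_estimates_of_radii:
  fixes d d' r r' D :: real
  assumes d: "0 < d" "0 < d'" "d \<le> sqrt 2" "d' \<le> sqrt 2"
    and lower: "min (sqrt 2) (r / 2) \<le> d" "min (sqrt 2) (r' / 2) \<le> d'"
    and upper: "d \<le> 2 * r \<or> d < r + r'" "d' \<le> 2 * r' \<or> d' < r' + r"
    and rates: "r \<le> D * r'" "r' \<le> D * r" "1 \<le> D"
    and r: "0 < r" "0 < r'" "r + r' \<le> sqrt 2"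
  shows "r + r' \<le> 2 * (d + d') \<and> 1 / (4 * D) \<le> d / d' \<and> d / d' \<le> 4 * D"
proof -
  have "d \<le> 4 * D * d'" "d' \<le> 4 * D * d"
    using diameter_ratio_le[OF d(2,3) lower(2) upper(1) rates(1,3) r(2)]
      diameter_ratio_le[OF d(1,4) lower(1) upper(2) rates(2,3) r(1)] by simp_all
  then have "1 / (4 * D) \<le> d / d'" "d / d' \<le> 4 * D"
    using d rates(3) by (simp_all add: divide_simps mult.commute mult.left_commute)
  moreover have "r + r' \<le> 2 * (d + d')"
    using lower d r unfolding min_le_iff_disj by argo
  ultimately show ?thesis by simp
qed

lemma dist_le_sqrt2_unit_square:
  fixes q q' :: "real \<times> real"
  assumes "0 \<le> fst q \<and> fst q \<le> 1 \<and> 0 \<le> snd q \<and> snd q \<le> 1"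
    and "0 \<le> fst q' \<and> fst q' \<le> 1 \<and> 0 \<le> snd q' \<and> snd q' \<le> 1"
  shows "dist q q' \<le> sqrt 2"
  using dist_le_sqrt2_mult[of q q' 1] assms by (auto simp: abs_le_iff)

lemma touch_time_radii_sum:
  assumes "0 < v i" "0 < v j"
  shows "touch_time p v i j * v i + touch_time p v i j * v j = dist (p i) (p j)"
proof -
  have "touch_time p v i j * v i + touch_time p v i j * v j = touch_time p v i j * (v i + v j)"
    by (simp add: distrib_left)
  also have "\<dots> = dist (p i) (p j)" using assms by (simp add: touch_time_def)
  finally show ?thesis .
qed

theorem lemma10:
  fixes n :: nat and p :: "nat \<Rightarrow> real \<times> real" and v :: "nat \<Rightarrow> real"
    and i j :: nat and Ni Nj :: qnode
  assumes unit_square: "\<forall>k\<in>{1..n}. 0 \<le> fst (p k) \<and> fst (p k) \<le> 1 \<and> 0 \<le> snd (p k) \<and> snd (p k) \<le> 1"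
    and distinct_centers: "inj_on p {1..n}"
    and pos_rates: "\<forall>k\<in>{1..n}. v k > 0"
    and distinct_times: "\<forall>a\<in>{1..n}. \<forall>b\<in>{1..n}. \<forall>c\<in>{1..n}. \<forall>d\<in>{1..n}.
        a < b \<and> c < d \<and> (a, b) \<noteq> (c, d) \<longrightarrow> touch_time p v a b \<noteq> touch_time p v c d"
    and i_range: "2 \<le> i" "i \<le> n"
    and j_range: "1 \<le> j" "j < i"
    and eliminates: "elim_time p v i = ereal (touch_time p v i j)"
    and Ni: "largest_occupied p v n i (touch_time p v i j) Ni"
    and Nj: "largest_occupied p v n j (touch_time p v i j) Nj"
  shows "setdist (cell Ni) (cell Nj) \<le> 2 * (diameter (cell Ni) + diameter (cell Nj))
       \<and> 1 / (4 * (Max (v ` {1..n}) / Min (v ` {1..n}))) \<le> diameter (cell Ni) / diameter (cell Nj)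
       \<and> diameter (cell Ni) / diameter (cell Nj) \<le> 4 * (Max (v ` {1..n}) / Min (v ` {1..n}))"
proof -
  have ij: "i \<in> {1..n}" "j \<in> {1..n}" using i_range j_range by auto
  have pij: "p i \<noteq> p j" using distinct_centers ij j_range(2) by (metis inj_onD less_irrefl)
  have vi: "0 < v i" and vj: "0 < v j" using pos_rates ij by auto
  define t where "t = touch_time p v i j"
  define D where "D = Max (v ` {1..n}) / Min (v ` {1..n})"
  have radii_sum: "t * v i + t * v j = dist (p i) (p j)" using touch_time_radii_sum vi vj by (simp add: t_def)
  have "0 < t" using pij vi vj by (simp add: t_def touch_time_def)
  then have ri: "0 < t * v i" and rj: "0 < t * v j" using vi vj by simp_all
  have unit: "0 \<le> fst (p i) \<and> fst (p i) \<le> 1 \<and> 0 \<le> snd (p i) \<and> snd (p i) \<le> 1"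
    "0 \<le> fst (p j) \<and> fst (p j) \<le> 1 \<and> 0 \<le> snd (p j) \<and> snd (p j) \<le> 1"
    using unit_square ij by blast+
  note bounds_i = largest_occupied_diameter_bounds[OF unit(1) Ni[folded t_def] ri ij pij[symmetric]]
  note bounds_j = largest_occupied_diameter_bounds[OF unit(2) Nj[folded t_def] rj ij(2,1) pij]
  have upper: "diameter (cell Ni) \<le> 2 * (t * v i) \<or> diameter (cell Ni) < t * v i + t * v j"
    "diameter (cell Nj) \<le> 2 * (t * v j) \<or> diameter (cell Nj) < t * v j + t * v i"
    using bounds_i(2) bounds_j(2) by (simp_all add: radii_sum add.commute[of "t * v j"] dist_commute)
  have "v i \<le> D * v j" "v j \<le> D * v i" "1 \<le> D"
    using rate_le_ratio_mult[of "{1..n}" v] one_le_Max_div_Min[of "{1..n}" v i] pos_rates ij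
    by (simp_all add: D_def)
  then have rates: "t * v i \<le> D * (t * v j)" "t * v j \<le> D * (t * v i)" "1 \<le> D"
    using \<open>0 < t\<close> mult_left_mono[of _ _ t] by (simp_all add: mult.left_commute)
  have "setdist (cell Ni) (cell Nj) \<le> dist (p i) (p j)"
    using Ni Nj by (simp add: largest_occupied_def occupies_def setdist_le_dist)
  moreover have "dist (p i) (p j) \<le> sqrt 2" using unit by (rule dist_le_sqrt2_unit_square)
  ultimately show ?thesis
    using diameter_estimates_of_radii[OF diameter_cell_pos diameter_cell_pos diameter_cell_le_sqrt2
        diameter_cell_le_sqrt2 bounds_i(1) bounds_j(1) upper rates ri rj] radii_sum
    by (simp add: D_def)
qed

end
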